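(* Let $X$ be a real-valued random variable and let $f,g:\mathbb{R}\to\mathbb{R}^+$ be bounded increasing functions. Then $$\operatorname{Var}[f(X)g(X)]\;\geq\;\operatorname{Var}[f(X)]\,\mathbb{E}[g(X)^2].$$ *)

theory Defs
  imports "HOL-Probability.Probability"
begin

end

theory Submission
  imports Defs
begin

(*
  For x \<le> y, monotonicity and nonnegativity give
  f y * g y - f x * g x \<ge> (f y - f x) * g y \<ge> 0, so the squared increment of f * g
  dominates the squared increment of f weighted by g\<^sup>2 at the larger point.  For three
  points, summing over the three pairs and replacing that weight by g\<^sup>2 at the remaining
  point still leaves a nonnegative quantity.  Integrating this pointwise inequality over
  three independent copies of X, each of the three pair terms contributes
  2 * (Var[f g] - Var[f] * E[g\<^sup>2]).
*)

lemma power2_diff_mult_le_of_mono: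
  fixes f g :: "'a::order \<Rightarrow> 'b::linordered_idom"
  assumes "mono f" "mono g" "\<And>x. 0 \<le> f x" "\<And>x. 0 \<le> g x" "x \<le> y"
  shows "(f x - f y)\<^sup>2 * (g y)\<^sup>2 \<le> (f x * g x - f y * g y)\<^sup>2"
proof -
  have f: "f x \<le> f y" and g: "g x \<le> g y"
    using assms by (simp_all add: monoD)
  have "0 \<le> (f y - f x) * g y"
    using f assms(4) by simp
  moreover have "(f y - f x) * g y \<le> f y * g y - f x * g x"
    using g assms(3)[of x] by (simp add: algebra_simps mult_left_mono)
  ultimately have "((f y - f x) * g y)\<^sup>2 \<le> (f y * g y - f x * g x)\<^sup>2"
    by (simp add: power_mono)
  then show ?thesis
    by (simp add: power_mult_distrib power2_commute)
qed

lemma three_point_ineq_of_mono: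
  fixes f g :: "'a::linorder \<Rightarrow> 'b::linordered_idom"
  assumes "mono f" "mono g" "\<And>x. 0 \<le> f x" "\<And>x. 0 \<le> g x"
  defines "D x y z \<equiv> (f x * g x - f y * g y)\<^sup>2 - (f x - f y)\<^sup>2 * (g z)\<^sup>2"
  shows "0 \<le> D p q r + D p r q + D q r p"
proof -
  note key = power2_diff_mult_le_of_mono[OF assms(1-4)]
  define S where "S p q r = D p q r + D p r q + D q r p" for p q r
  have sorted: "0 \<le> S p q r" if "p \<le> q" "q \<le> r" for p q r
  proof -
    have f: "(f p - f q)\<^sup>2 \<le> (f p - f r)\<^sup>2" and g: "(g p)\<^sup>2 \<le> (g r)\<^sup>2" "(g q)\<^sup>2 \<le> (g r)\<^sup>2"
      using that assms(1-4) by (auto intro!: power_mono simp: power2_commute[of "f p"] monoD)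
    have "0 \<le> ((f p - f r)\<^sup>2 - (f p - f q)\<^sup>2) * ((g r)\<^sup>2 - (g q)\<^sup>2) + (f q - f r)\<^sup>2 * ((g r)\<^sup>2 - (g p)\<^sup>2)"
      using f g by simp
    also have "\<dots> = (f p - f q)\<^sup>2 * (g q)\<^sup>2 + (f p - f r)\<^sup>2 * (g r)\<^sup>2 + (f q - f r)\<^sup>2 * (g r)\<^sup>2
        - (f p - f q)\<^sup>2 * (g r)\<^sup>2 - (f p - f r)\<^sup>2 * (g q)\<^sup>2 - (f q - f r)\<^sup>2 * (g p)\<^sup>2"
      by (simp add: algebra_simps)
    also have "\<dots> \<le> S p q r"
      using key[OF that(1)] key[OF order.trans[OF that]] key[OF that(2)]
      unfolding S_def D_def by linarith
    finally show ?thesis .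
  qed
  have swap12: "S p q r = S q p r" and swap23: "S p q r = S p r q" for p q r
    unfolding S_def D_def by (simp_all add: power2_commute algebra_simps)
  have "0 \<le> S p q r"
    by (metis sorted swap12 swap23 linear)
  then show ?thesis unfolding S_def .
qed

lemma (in finite_measure) integrable_power2_diff_const:
  fixes u :: "'a \<Rightarrow> real"
  assumes "u \<in> borel_measurable M" "integrable M (\<lambda>x. (u x)\<^sup>2)"
  shows "integrable M (\<lambda>x. (u x - t)\<^sup>2)"
  using assms square_integrable_imp_integrable[OF assms]
  by (simp add: power2_diff)

lemma (in prob_space) integral_power2_diff_const:
  fixes u :: "'a \<Rightarrow> real"
  assumes "u \<in> borel_measurable M" "integrable M (\<lambda>x. (u x)\<^sup>2)"
  shows "(\<integral>x. (u x - t)\<^sup>2 \<partial>M) = variance u + (t - expectation u)\<^sup>2"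
proof -
  have "integrable M u"
    using assms by (rule square_integrable_imp_integrable)
  then show ?thesis
    using assms unfolding variance_eq[OF \<open>integrable M u\<close> assms(2)]
    by (simp add: power2_diff prob_space)
qed

lemma (in prob_space) variance_mult_expectation_le_variance:
  fixes u w h :: "'a \<Rightarrow> real"
  assumes u: "u \<in> borel_measurable M" "integrable M (\<lambda>x. (u x)\<^sup>2)"
    and w: "w \<in> borel_measurable M" "integrable M (\<lambda>x. (w x)\<^sup>2)"
    and h: "integrable M h"
  defines "D x y z \<equiv> (w x - w y)\<^sup>2 - (u x - u y)\<^sup>2 * h z"
  assumes three_point: "\<And>a b c. 0 \<le> D a b c + D a c b + D b c a"
  shows "variance u * expectation h \<le> variance w"
proof -
  note integrable_u = integrable_power2_diff_const[OF u]
  note integrable_w = integrable_power2_diff_const[OF w]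
  note integral_u = integral_power2_diff_const[OF u]
  note integral_w = integral_power2_diff_const[OF w]
  have D_first: "(\<integral>a. D a y z \<partial>M) = variance w + (w y - expectation w)\<^sup>2
      - (variance u + (u y - expectation u)\<^sup>2) * h z" for y z
    unfolding D_def using integrable_u integrable_w
    by (simp add: integral_u[of "u y"] integral_w[of "w y"])
  have D_third: "(\<integral>a. D x y a \<partial>M) = (w x - w y)\<^sup>2 - (u x - u y)\<^sup>2 * expectation h" for x y
    unfolding D_def using h
    by (simp add: prob_space)
  have D_integrable: "integrable M (\<lambda>a. D a y z)" "integrable M (\<lambda>a. D x y a)" for x y z
    unfolding D_def using integrable_u integrable_w h by simp_all
  define S where "S b c = \<integral>a. D a b c + D a c b + D b c a \<partial>M" for b c
  have inner: "S b c =
      variance w + (w b - expectation w)\<^sup>2 - (variance u + (u b - expectation u)\<^sup>2) * h c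
    + variance w + (w c - expectation w)\<^sup>2 - (variance u + (u c - expectation u)\<^sup>2) * h b
    + (w b - w c)\<^sup>2 - (u b - u c)\<^sup>2 * expectation h" for b c
    unfolding S_def using D_integrable by (simp add: D_first D_third)
  have middle: "(\<integral>b. S b c \<partial>M) = 2 * variance w - 2 * variance u * h c
    + 2 * (variance w + (w c - expectation w)\<^sup>2 - (variance u + (u c - expectation u)\<^sup>2) * expectation h)" for c
    unfolding inner using integrable_u integrable_w h
    by (simp add: integral_u[of "u c"] integral_w[of "w c"] prob_space algebra_simps)
  have outer: "(\<integral>c. \<integral>b. S b c \<partial>M \<partial>M) = 6 * (variance w - variance u * expectation h)"
    unfolding middle using integrable_u integrable_w h
    by (simp add: prob_space algebra_simps)
  have "0 \<le> (\<integral>c. \<integral>b. S b c \<partial>M \<partial>M)"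
    unfolding S_def by (intro Bochner_Integration.integral_nonneg three_point)
  then show ?thesis unfolding outer by simp
qed

lemma (in finite_measure) integrable_power2_of_bounded:
  fixes u :: "'a \<Rightarrow> real"
  assumes "u \<in> borel_measurable M" "\<And>x. x \<in> space M \<Longrightarrow> \<bar>u x\<bar> \<le> B"
  shows "integrable M (\<lambda>x. (u x)\<^sup>2)"
proof (rule integrable_const_bound[where B = "B\<^sup>2"])
  show "AE x in M. norm ((u x)\<^sup>2) \<le> B\<^sup>2"
  proof (intro AE_I2)
    fix x assume "x \<in> space M"
    then have "\<bar>u x\<bar> \<le> B" by (rule assms(2))
    then show "norm ((u x)\<^sup>2) \<le> B\<^sup>2"
      using power2_le_iff_abs_le[of B "u x"] by simp
  qed
qed (use assms(1) in simp)

theorem lemma4p10: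
  fixes M :: "'a measure" and X :: "'a \<Rightarrow> real" and f g :: "real \<Rightarrow> real"
  assumes "prob_space M"
    and "X \<in> borel_measurable M"
    and "mono f" and "mono g"
    and "bounded (range f)" and "bounded (range g)"
    and "\<And>x. f x \<ge> 0" and "\<And>x. g x \<ge> 0"
  shows "prob_space.variance M (\<lambda>\<omega>. f (X \<omega>) * g (X \<omega>))
           \<ge> prob_space.variance M (\<lambda>\<omega>. f (X \<omega>))
              * prob_space.expectation M (\<lambda>\<omega>. (g (X \<omega>))^2)"
proof -
  interpret prob_space M by fact
  have [measurable]: "X \<in> borel_measurable M" "f \<in> borel_measurable borel" "g \<in> borel_measurable borel"
    using assms(2-4) by (simp_all add: borel_measurable_mono)
  obtain F G where F: "\<And>x. \<bar>f x\<bar> \<le> F" and G: "\<And>x. \<bar>g x\<bar> \<le> G"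
    using assms(5,6) unfolding bounded_iff by auto
  have FG: "\<bar>f x * g x\<bar> \<le> F * G" for x
    using F G by (simp add: abs_mult mult_mono')
  show ?thesis
  proof (rule variance_mult_expectation_le_variance)
    show "(\<lambda>\<omega>. f (X \<omega>)) \<in> borel_measurable M" "(\<lambda>\<omega>. f (X \<omega>) * g (X \<omega>)) \<in> borel_measurable M"
      by measurable
    show "integrable M (\<lambda>\<omega>. (f (X \<omega>))\<^sup>2)"
      using F by (intro integrable_power2_of_bounded) simp_all
    show "integrable M (\<lambda>\<omega>. (f (X \<omega>) * g (X \<omega>))\<^sup>2)"
      using FG by (intro integrable_power2_of_bounded) simp_all
    show "integrable M (\<lambda>\<omega>. (g (X \<omega>))\<^sup>2)"
      using G by (intro integrable_power2_of_bounded) simp_all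
  qed (rule three_point_ineq_of_mono[OF assms(3,4,7,8)])
qed

end
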